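(* Let $p$ be prime, $\mathbf k$ algebraically closed of characteristic $p$, $S=\mathbf k[x,y]$, $\mathfrak m=\langle x,y\rangle$, $d\ge1$ and $c\in C(d,2,p)$. Let $\mathcal Z(c,d)=\{0=t_0<t_1<\dots<t_\ell\}$ and let $\delta_{t_0},\dots,\delta_{t_\ell}$ be the type-$c$ segmentation of $d$. Then $$I_{c,d}=\big(\mathfrak m^{\mathrm{Cont}(\delta_{t_0})}\big)^{[p^{t_0}]}\big(\mathfrak m^{\mathrm{Cont}(\delta_{t_1})}\big)^{[p^{t_1}]}\cdots\big(\mathfrak m^{\mathrm{Cont}(\delta_{t_\ell})}\big)^{[p^{t_\ell}]}.$$ In particular, the minimal monomial generators of $I_{c,d}$ are exactly the monomials $x^ay^{d-a}$ with $a=w_0p^{t_0}+w_1p^{t_1}+\cdots+w_\ell p^{t_\ell}$ for integers $0\le w_r\le\mathrm{Cont}(\delta_{t_r})$.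
   Context: Base-$p$ expansion $d=\sum_{j=0}^Md_jp^j$, $0\le d_j\le p-1$, $d_M\ne0$. The carry pattern $(c_1,\dots,c_M)$ of a monomial $x^ay^b$ of degree $d$ is determined by $\sum_{j<\ell}(a_j+b_j)p^j=c_\ell p^\ell+\sum_{j<\ell}d_jp^j$ for $1\le\ell\le M$ ($a_j,b_j$ base-$p$ digits; $c_i=0$ for $i<1$ or $i>M$). $C(d,2,p)$ is the set of carry patterns of degree-$d$ monomials in two variables, ordered componentwise; $I_{c,d}$ is the ideal generated by all degree-$d$ monomials with carry pattern $\le c$. Define $\mathcal Z(c,d)=\{0\le k\le M: c_k=0,\ (c_{k-1},d_{k-1})\ne(0,p-1)\}$, with the convention that $0\in\mathcal Z(c,d)$; write it as $\{0=t_0<t_1<\dots<t_\ell\}$ and set $t_{\ell+1}=M+1$. For $0\le a$ with base-$p$ digits $a_j$, the $c$-segment of $a$ starting at $t_r$ is $a_{[t_r,t_{r+1})}=(a_{t_r},\dots,a_{t_{r+1}-1})$, and its content is $\mathrm{Cont}(a_{[t_r,t_{r+1})})=\sum_{k=t_r}^{t_{r+1}-1}a_kp^{k-t_r}$. Write $\delta_{t_r}=d_{[t_r,t_{r+1})}$; $\{\delta_{t_0},\dots,\delta_{t_\ell}\}$ is the type-$c$ segmentation of $d$. For an ideal $J=\langle f_1,\dots,f_s\rangle$, $J^{[p^e]}=\langle f_1^{p^e},\dots,f_s^{p^e}\rangle$. *)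

theory Defs
  imports "HOL-Computational_Algebra.Polynomial"
begin

definition digit :: "nat \<Rightarrow> nat \<Rightarrow> nat \<Rightarrow> nat" where
  "digit p n j = n div p ^ j mod p"

definition top_index :: "nat \<Rightarrow> nat \<Rightarrow> nat" where
  "top_index p d = (GREATEST j. digit p d j \<noteq> 0)"

text \<open>Carry pattern (c_1,...,c_M) of x^a y^b in degree d, as a function
  nat => nat which is 0 outside [1,M]; c_l is determined by
  sum_{j<l} (a_j+b_j) p^j = c_l p^l + sum_{j<l} d_j p^j.\<close>
definition carry :: "nat \<Rightarrow> nat \<Rightarrow> nat \<Rightarrow> nat \<Rightarrow> nat \<Rightarrow> nat" where
  "carry p d a b l =
     (if 1 \<le> l \<and> l \<le> top_index p d then
        ((\<Sum>j<l. (digit p a j + digit p b j) * p ^ j) - (\<Sum>j<l. digit p d j * p ^ j)) div p ^ l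
      else 0)"

definition carry_patterns :: "nat \<Rightarrow> nat \<Rightarrow> (nat \<Rightarrow> nat) set" where
  "carry_patterns d p = {carry p d a b | a b. a + b = d}"

definition pat_le :: "(nat \<Rightarrow> nat) \<Rightarrow> (nat \<Rightarrow> nat) \<Rightarrow> bool" where
  "pat_le c' c \<longleftrightarrow> (\<forall>i. c' i \<le> c i)"

text \<open>The set Z(c,d) (with the convention 0 \<in> Z(c,d); c_0 = 0).\<close>
definition Zset :: "nat \<Rightarrow> nat \<Rightarrow> (nat \<Rightarrow> nat) \<Rightarrow> nat set" where
  "Zset p d c = {0} \<union> {k. k \<le> top_index p d \<and> c k = 0 \<and>
       (1 \<le> k \<longrightarrow> \<not> (c (k - 1) = 0 \<and> digit p d (k - 1) = p - 1))}"

text \<open>Successor t_{r+1} of t_r in Z(c,d), with t_{l+1} = M+1.\<close>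
definition next_t :: "nat \<Rightarrow> nat \<Rightarrow> (nat \<Rightarrow> nat) \<Rightarrow> nat \<Rightarrow> nat" where
  "next_t p d c t = (if \<exists>s\<in>Zset p d c. t < s then (LEAST s. s \<in> Zset p d c \<and> t < s)
                     else top_index p d + 1)"

definition cont :: "nat \<Rightarrow> nat \<Rightarrow> nat \<Rightarrow> nat \<Rightarrow> nat" where
  "cont p a s e = (\<Sum>k\<in>{s..<e}. digit p a k * p ^ (k - s))"

text \<open>Content of delta_t, the type-c segment of d starting at t.\<close>
definition seg_cont :: "nat \<Rightarrow> nat \<Rightarrow> (nat \<Rightarrow> nat) \<Rightarrow> nat \<Rightarrow> nat" where
  "seg_cont p d c t = cont p d t (next_t p d c t)"

section \<open>The ring S = k[x,y], rendered as ('a poly) poly, and its ideals\<close>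

definition varX :: "'a::comm_ring_1 poly poly" where
  "varX = monom 1 1"

definition varY :: "'a::comm_ring_1 poly poly" where
  "varY = [:monom 1 1:]"

definition mon :: "nat \<Rightarrow> nat \<Rightarrow> 'a::comm_ring_1 poly poly" where
  "mon i j = varX ^ i * varY ^ j"

definition ideal_gen :: "'b::comm_ring_1 set \<Rightarrow> 'b set" where
  "ideal_gen G = {f. \<exists>A r. finite A \<and> A \<subseteq> G \<and> f = (\<Sum>g\<in>A. r g * g)}"

definition ideal_prod :: "'i set \<Rightarrow> ('i \<Rightarrow> 'b::comm_ring_1 set) \<Rightarrow> 'b set" where
  "ideal_prod T I = ideal_gen {\<Prod>t\<in>T. f t | f. \<forall>t\<in>T. f t \<in> I t}"

definition ideal_pow :: "'b::comm_ring_1 set \<Rightarrow> nat \<Rightarrow> 'b set" where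
  "ideal_pow I n = ideal_prod {..<n} (\<lambda>_. I)"

definition frob_pow :: "'b::comm_ring_1 set \<Rightarrow> nat \<Rightarrow> 'b set" where
  "frob_pow J q = ideal_gen ((\<lambda>f. f ^ q) ` J)"

definition max_ideal :: "'a::comm_ring_1 poly poly set" where
  "max_ideal = ideal_gen {varX, varY}"

definition Icd :: "nat \<Rightarrow> nat \<Rightarrow> (nat \<Rightarrow> nat) \<Rightarrow> 'a::comm_ring_1 poly poly set" where
  "Icd p d c = ideal_gen {mon a b | a b. a + b = d \<and> pat_le (carry p d a b) c}"

definition min_mon_gens :: "'a::comm_ring_1 poly poly set \<Rightarrow> (nat \<times> nat) set" where
  "min_mon_gens I = {(i, j). mon i j \<in> I \<and>
      (\<forall>i' j'. i' \<le> i \<and> j' \<le> j \<and> (i', j') \<noteq> (i, j) \<longrightarrow> mon i' j' \<notin> I)}"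

end

theory Submission
  imports Defs "HOL-Computational_Algebra.Primes"
begin

text \<open>For \<open>a \<le> d\<close>, the carry of \<open>x^a y^(d-a)\<close> at position \<open>l\<close> is \<open>0\<close> or \<open>1\<close>
  according as \<open>a mod p^l \<le> d mod p^l\<close> or not, so the carry pattern is \<open>\<le> c\<close> iff this
  inequality holds wherever \<open>c\<^sub>l = 0\<close>. A position \<open>l \<notin> Z(c,d)\<close> with \<open>c\<^sub>l = 0\<close> has
  \<open>d\<^sub>l\<^sub>-\<^sub>1 = p - 1\<close>, so its inequality follows from the one at \<open>l - 1\<close>. Cutting the digits
  at the points \<open>t\<close> of \<open>Z(c,d)\<close>, the remaining inequalities say exactly that
  \<open>a = \<Sum> w\<^sub>t p^t\<close> with \<open>w\<^sub>t \<le> Cont(\<delta>\<^sub>t)\<close>.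
  On the ideal side, Frobenius is additive in characteristic \<open>p\<close>, so \<open>(m^n)^[q]\<close> is
  generated by the monomials \<open>x^(iq) y^((n-i)q)\<close>, and the product of the ideals
  \<open>(m^Cont(\<delta>\<^sub>t))^[p^t]\<close> is generated by the same monomials \<open>x^a y^(d-a)\<close>, which are its minimal
  generators since they all have degree \<open>d\<close>. Neither \<open>d \<ge> 1\<close> nor \<open>c \<in> C(d,2,p)\<close> is used:
  the description holds for every \<open>c\<close>.\<close>

section \<open>Ideals generated by a set\<close>

lemma ideal_gen_mem: "g \<in> G \<Longrightarrow> g \<in> ideal_gen G"
  unfolding ideal_gen_def by (rule CollectI, rule exI[of _ "{g}"], rule exI[of _ "\<lambda>_. 1"]) simp

lemma ideal_gen_zero: "0 \<in> ideal_gen G"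
  unfolding ideal_gen_def by (rule CollectI, rule exI[of _ "{}"]) simp

lemma ideal_gen_add:
  assumes "f \<in> ideal_gen G" "h \<in> ideal_gen G"
  shows "f + h \<in> ideal_gen G"
proof -
  obtain A r where A: "finite A" "A \<subseteq> G" "f = (\<Sum>g\<in>A. r g * g)"
    using assms(1) unfolding ideal_gen_def by blast
  obtain B s where B: "finite B" "B \<subseteq> G" "h = (\<Sum>g\<in>B. s g * g)"
    using assms(2) unfolding ideal_gen_def by blast
  define u where "u g = (if g \<in> A then r g else 0) + (if g \<in> B then s g else 0)" for g
  have "f = (\<Sum>g\<in>A \<union> B. (if g \<in> A then r g else 0) * g)"
    unfolding A(3) using A B by (intro sum.mono_neutral_cong_left) auto
  moreover have "h = (\<Sum>g\<in>A \<union> B. (if g \<in> B then s g else 0) * g)"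
    unfolding B(3) using A B by (intro sum.mono_neutral_cong_left) auto
  ultimately have "f + h = (\<Sum>g\<in>A \<union> B. u g * g)"
    by (simp add: u_def distrib_right sum.distrib)
  then show ?thesis
    unfolding ideal_gen_def using A B by blast
qed

lemma ideal_gen_mult_left: "f \<in> ideal_gen G \<Longrightarrow> r * f \<in> ideal_gen G"
  unfolding ideal_gen_def
  by (auto simp: sum_distrib_left mult.assoc intro!: exI[of _ "\<lambda>g. r * _ g"])

lemma ideal_gen_sum:
  "(\<And>i. i \<in> A \<Longrightarrow> f i \<in> ideal_gen G) \<Longrightarrow> sum f A \<in> ideal_gen G"
  by (induction A rule: infinite_finite_induct) (auto intro: ideal_gen_zero ideal_gen_add)

lemma ideal_gen_minimal:
  assumes "G \<subseteq> ideal_gen H"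
  shows "ideal_gen G \<subseteq> ideal_gen H"
proof
  fix f assume "f \<in> ideal_gen G"
  then obtain A s where "A \<subseteq> G" "f = (\<Sum>g\<in>A. s g * g)"
    unfolding ideal_gen_def by blast
  then show "f \<in> ideal_gen H"
    using assms by (auto intro!: ideal_gen_sum ideal_gen_mult_left)
qed

lemma ideal_gen_eqI: "G \<subseteq> ideal_gen H \<Longrightarrow> H \<subseteq> ideal_gen G \<Longrightarrow> ideal_gen G = ideal_gen H"
  using ideal_gen_minimal by blast

lemma ideal_gen_mult:
  assumes "a \<in> ideal_gen X" "b \<in> ideal_gen Y"
  shows "a * b \<in> ideal_gen {x * y |x y. x \<in> X \<and> y \<in> Y}"
proof -
  obtain A r where A: "A \<subseteq> X" "a = (\<Sum>x\<in>A. r x * x)"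
    using assms(1) unfolding ideal_gen_def by blast
  obtain B s where B: "B \<subseteq> Y" "b = (\<Sum>y\<in>B. s y * y)"
    using assms(2) unfolding ideal_gen_def by blast
  have "a * b = (\<Sum>x\<in>A. \<Sum>y\<in>B. (r x * s y) * (x * y))"
    unfolding A(2) B(2) sum_product by (simp add: ac_simps)
  also have "\<dots> \<in> ideal_gen {x * y |x y. x \<in> X \<and> y \<in> Y}"
    using A(1) B(1) by (blast intro: ideal_gen_sum ideal_gen_mult_left ideal_gen_mem)
  finally show ?thesis .
qed

definition choice_prods :: "'i set \<Rightarrow> ('i \<Rightarrow> 'b::comm_monoid_mult set) \<Rightarrow> 'b set" where
  "choice_prods T G = {\<Prod>t\<in>T. g t | g. \<forall>t\<in>T. g t \<in> G t}"

lemma ideal_prod_eq_ideal_gen_choice_prods: "ideal_prod T I = ideal_gen (choice_prods T I)"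
  unfolding ideal_prod_def choice_prods_def ..

lemma choice_prods_insert:
  assumes "finite T" "x \<notin> T"
  shows "choice_prods (insert x T) G = {u * v |u v. u \<in> G x \<and> v \<in> choice_prods T G}"
proof safe
  fix z assume "z \<in> choice_prods (insert x T) G"
  then obtain g where "\<forall>t\<in>insert x T. g t \<in> G t" "z = (\<Prod>t\<in>insert x T. g t)"
    unfolding choice_prods_def by blast
  then show "\<exists>u v. z = u * v \<and> u \<in> G x \<and> v \<in> choice_prods T G"
    using assms by (auto simp: choice_prods_def)
next
  fix u v assume "u \<in> G x" "v \<in> choice_prods T G"
  then obtain g where g: "\<forall>t\<in>T. g t \<in> G t" "v = (\<Prod>t\<in>T. g t)"
    unfolding choice_prods_def by blast
  have "u * v = (\<Prod>t\<in>insert x T. (g(x := u)) t)"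
    using assms g(2) by (auto intro!: prod.cong arg_cong[where f="(*) u"])
  then show "u * v \<in> choice_prods (insert x T) G"
    using \<open>u \<in> G x\<close> g(1) assms unfolding choice_prods_def by (intro CollectI exI[of _ "g(x := u)"]) auto
qed

lemma prod_mem_ideal_gen_choice_prods:
  "finite T \<Longrightarrow> (\<forall>t\<in>T. f t \<in> ideal_gen (G t)) \<Longrightarrow> (\<Prod>t\<in>T. f t) \<in> ideal_gen (choice_prods T G)"
proof (induction T rule: finite_induct)
  case empty
  then show ?case by (auto simp: choice_prods_def intro: ideal_gen_mem)
next
  case (insert x T)
  then have "f x * (\<Prod>t\<in>T. f t) \<in> ideal_gen (choice_prods (insert x T) G)"
    unfolding choice_prods_insert[OF insert.hyps] by (intro ideal_gen_mult) simp_all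
  then show ?case using insert.hyps by simp
qed

lemma ideal_prod_ideal_gen:
  assumes "finite T"
  shows "ideal_prod T (\<lambda>t. ideal_gen (G t)) = ideal_gen (choice_prods T G)"
  unfolding ideal_prod_eq_ideal_gen_choice_prods
proof (rule ideal_gen_eqI)
  show "choice_prods T (\<lambda>t. ideal_gen (G t)) \<subseteq> ideal_gen (choice_prods T G)"
    using prod_mem_ideal_gen_choice_prods[OF assms] unfolding choice_prods_def by blast
  show "choice_prods T G \<subseteq> ideal_gen (choice_prods T (\<lambda>t. ideal_gen (G t)))"
    unfolding choice_prods_def by (blast intro: ideal_gen_mem)
qed

lemma frob_pow_ideal_gen:
  assumes "prime CHAR('b::comm_ring_1)" "q = CHAR('b) ^ e"
  shows "frob_pow (ideal_gen G) q = ideal_gen ((\<lambda>f. (f::'b) ^ q) ` G)"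
  unfolding frob_pow_def
proof (rule ideal_gen_eqI)
  show "(\<lambda>f. f ^ q) ` ideal_gen G \<subseteq> ideal_gen ((\<lambda>f. f ^ q) ` G)"
  proof
    fix z assume "z \<in> (\<lambda>f. f ^ q) ` ideal_gen G"
    then obtain A r where A: "A \<subseteq> G" "z = (\<Sum>g\<in>A. r g * g) ^ q"
      unfolding ideal_gen_def by blast
    have "z = (\<Sum>g\<in>A. r g ^ q * g ^ q)"
      unfolding A(2) freshmans_dream_sum'[OF assms] by (simp add: power_mult_distrib)
    also have "\<dots> \<in> ideal_gen ((\<lambda>f. f ^ q) ` G)"
      using A(1) by (blast intro: ideal_gen_sum ideal_gen_mult_left ideal_gen_mem)
    finally show "z \<in> ideal_gen ((\<lambda>f. f ^ q) ` G)" .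
  qed
  show "(\<lambda>f. f ^ q) ` G \<subseteq> ideal_gen ((\<lambda>f. f ^ q) ` ideal_gen G)"
    by (blast intro: ideal_gen_mem)
qed

section \<open>Base-\<open>p\<close> digits and carries\<close>

lemma mod_power_eq_digit_sum: "x mod p ^ l = (\<Sum>j<l. digit p x j * p ^ j)"
proof (induction l)
  case (Suc l)
  have "x mod p ^ Suc l = p ^ l * (x div p ^ l mod p) + x mod p ^ l"
    by (metis mod_mult2_eq power_Suc2)
  then show ?case using Suc by (simp add: digit_def mult.commute)
qed simp

lemma mod_power_Suc_digit: "x mod p ^ Suc k = x mod p ^ k + digit p x k * p ^ k"
  unfolding mod_power_eq_digit_sum by simp

lemma digits_eq_zero_imp_zero:
  assumes "2 \<le> p" "\<forall>j. digit p x j = 0"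
  shows "x = 0"
proof -
  have "x < p ^ x"
    using less_exp power_mono[OF assms(1), of x] by (meson le0 less_le_trans)
  then have "x = x mod p ^ x" by simp
  also have "\<dots> = 0" unfolding mod_power_eq_digit_sum using assms(2) by simp
  finally show ?thesis .
qed

lemma digit_nonzero_imp_le_top_index:
  assumes "2 \<le> p" "digit p d j \<noteq> 0"
  shows "j \<le> top_index p d"
proof -
  have bound: "k < d" if "digit p d k \<noteq> 0" for k
  proof -
    have "p ^ k \<le> d"
      using that unfolding digit_def by (metis div_eq_0_iff mod_0 not_less)
    moreover have "k < p ^ k"
      using less_exp power_mono[OF assms(1), of k] by (meson le0 less_le_trans)
    ultimately show ?thesis by linarith
  qed
  show ?thesis
    unfolding top_index_def using assms(2) bound by (metis (mono_tags, lifting) Greatest_le_nat less_imp_le_nat)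
qed

lemma less_power_Suc_top_index:
  assumes "2 \<le> p"
  shows "d < p ^ Suc (top_index p d)"
proof -
  define q where "q = d div p ^ Suc (top_index p d)"
  have "digit p q j = digit p d (Suc (top_index p d) + j)" for j
    unfolding q_def digit_def by (simp add: div_mult2_eq power_add)
  moreover have "digit p d (Suc (top_index p d) + j) = 0" for j
    using digit_nonzero_imp_le_top_index[OF assms, of d "Suc (top_index p d) + j"] by auto
  ultimately have "q = 0"
    using digits_eq_zero_imp_zero[OF assms] by auto
  then show ?thesis unfolding q_def using assms by (simp add: div_eq_0_iff)
qed

lemma mod_add_carry:
  fixes P a b :: nat
  assumes "0 < P"
  shows "(a mod P + b mod P - (a + b) mod P) div P = (if a mod P \<le> (a + b) mod P then 0 else 1)"
proof -
  have lt: "a mod P < P" "b mod P < P" using assms by auto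
  have "(a mod P + b mod P) mod P = (a + b) mod P" by (simp add: mod_add_eq)
  then have split: "a mod P + b mod P = P * ((a mod P + b mod P) div P) + (a + b) mod P"
    by (metis div_mult_mod_eq mult.commute)
  have "a mod P + b mod P < 2 * P"
    using lt by linarith
  then have "(a mod P + b mod P) div P < 2"
    by (simp add: div_less_iff_less_mult)
  then consider "(a mod P + b mod P) div P = 0" | "(a mod P + b mod P) div P = 1" by linarith
  then show ?thesis
  proof cases
    case 1
    then show ?thesis using split by simp
  next
    case 2
    then have "a mod P + b mod P = P + (a + b) mod P" using split by simp
    then have "\<not> a mod P \<le> (a + b) mod P" using lt by linarith
    then show ?thesis using \<open>a mod P + b mod P = P + (a + b) mod P\<close> assms by simp
  qed
qed

lemma carry_eq_if_mod_le:
  assumes "0 < p" "a \<le> d" "1 \<le> l" "l \<le> top_index p d"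
  shows "carry p d a (d - a) l = (if a mod p ^ l \<le> d mod p ^ l then 0 else 1)"
proof -
  have "(\<Sum>j<l. (digit p a j + digit p (d - a) j) * p ^ j) = a mod p ^ l + (d - a) mod p ^ l"
    by (simp add: mod_power_eq_digit_sum distrib_right sum.distrib)
  then show ?thesis
    using assms mod_add_carry[of "p ^ l" a "d - a"]
    unfolding carry_def by (simp add: mod_power_eq_digit_sum[symmetric])
qed

lemma pat_le_carry_iff:
  assumes "0 < p" "a \<le> d"
  shows "pat_le (carry p d a (d - a)) c \<longleftrightarrow>
         (\<forall>l. 1 \<le> l \<and> l \<le> top_index p d \<and> c l = 0 \<longrightarrow> a mod p ^ l \<le> d mod p ^ l)"
  unfolding pat_le_def
proof safe
  fix l assume H: "\<forall>i. carry p d a (d - a) i \<le> c i" "1 \<le> l" "l \<le> top_index p d" "c l = 0"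
  then have "carry p d a (d - a) l = 0"
    by (metis le_zero_eq)
  then show "a mod p ^ l \<le> d mod p ^ l"
    using carry_eq_if_mod_le[OF assms, of l] H by (auto split: if_splits)
next
  fix i assume "\<forall>l. 1 \<le> l \<and> l \<le> top_index p d \<and> c l = 0 \<longrightarrow> a mod p ^ l \<le> d mod p ^ l"
  then show "carry p d a (d - a) i \<le> c i"
    using carry_eq_if_mod_le[OF assms, of i] unfolding carry_def by (cases "c i = 0") auto
qed

lemma mod_le_on_zero_carries_iff_Zset:
  assumes "2 \<le> p"
  shows "(\<forall>l. 1 \<le> l \<and> l \<le> top_index p d \<and> c l = 0 \<longrightarrow> a mod p ^ l \<le> d mod p ^ l) \<longleftrightarrow>
         (\<forall>l\<in>Zset p d c. a mod p ^ l \<le> d mod p ^ l)"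
proof
  assume H: "\<forall>l. 1 \<le> l \<and> l \<le> top_index p d \<and> c l = 0 \<longrightarrow> a mod p ^ l \<le> d mod p ^ l"
  show "\<forall>l\<in>Zset p d c. a mod p ^ l \<le> d mod p ^ l"
  proof
    fix l assume "l \<in> Zset p d c"
    with H show "a mod p ^ l \<le> d mod p ^ l"
      unfolding Zset_def by (cases "l = 0") auto
  qed
next
  assume Z: "\<forall>l\<in>Zset p d c. a mod p ^ l \<le> d mod p ^ l"
  have "c l = 0 \<longrightarrow> l \<le> top_index p d \<longrightarrow> a mod p ^ l \<le> d mod p ^ l" for l
  proof (induction l)
    case (Suc k)
    show ?case
    proof (intro impI)
      assume l: "c (Suc k) = 0" "Suc k \<le> top_index p d"
      show "a mod p ^ Suc k \<le> d mod p ^ Suc k"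
      proof (cases "Suc k \<in> Zset p d c")
        case False
        then have k: "c k = 0" "digit p d k = p - 1"
          using l unfolding Zset_def by auto
        have "digit p a k < p"
          using assms by (simp add: digit_def)
        then have "digit p a k * p ^ k \<le> (p - 1) * p ^ k"
          by (intro mult_le_mono1) simp
        moreover have "a mod p ^ k \<le> d mod p ^ k"
          using Suc k l by simp
        ultimately show ?thesis
          unfolding mod_power_Suc_digit k(2) by linarith
      qed (use Z in blast)
    qed
  qed simp
  then show "\<forall>l. 1 \<le> l \<and> l \<le> top_index p d \<and> c l = 0 \<longrightarrow> a mod p ^ l \<le> d mod p ^ l"
    by blast
qed

section \<open>Segmentation of the digits\<close>

definition weighted_sums :: "'i set \<Rightarrow> ('i \<Rightarrow> nat) \<Rightarrow> ('i \<Rightarrow> nat) \<Rightarrow> nat set" where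
  "weighted_sums Z n q = {\<Sum>t\<in>Z. w t * q t | w. \<forall>t\<in>Z. w t \<le> n t}"

lemma cont_mult_power: "t \<le> e \<Longrightarrow> cont p x t e * p ^ t = (\<Sum>k\<in>{t..<e}. digit p x k * p ^ k)"
  unfolding cont_def sum_distrib_right
  by (intro sum.cong) (auto simp: mult.assoc power_add[symmetric])

lemma mod_power_cont: "t \<le> e \<Longrightarrow> x mod p ^ e = x mod p ^ t + cont p x t e * p ^ t"
  unfolding cont_mult_power mod_power_eq_digit_sum
  using sum.atLeastLessThan_concat[of 0 t e "\<lambda>k. digit p x k * p ^ k"] by (simp add: atLeast0LessThan)

locale segmentation =
  fixes Z :: "nat set" and M :: nat
  assumes subset_atMost: "Z \<subseteq> {..M}" and zero_mem: "0 \<in> Z"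
begin

text \<open>\<open>seg_end t\<^sub>r = t\<^sub>r\<^sub>+\<^sub>1\<close>, with \<open>t\<^sub>\<ell>\<^sub>+\<^sub>1 = M + 1\<close>: the segments \<open>[t, seg_end t)\<close>, \<open>t \<in> Z\<close>,
  partition \<open>{0..M}\<close>.\<close>
definition seg_end :: "nat \<Rightarrow> nat" where
  "seg_end t = (if \<exists>s\<in>Z. t < s then LEAST s. s \<in> Z \<and> t < s else M + 1)"

lemma finite_Z: "finite Z"
  using subset_atMost finite_subset by blast

lemma seg_end_gt: "t \<in> Z \<Longrightarrow> t < seg_end t"
  and seg_end_mem: "t \<in> Z \<Longrightarrow> seg_end t \<in> Z \<or> seg_end t = Suc M"
  using LeastI[of "\<lambda>s. s \<in> Z \<and> t < s"] subset_atMost unfolding seg_end_def by auto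

lemma seg_end_eqI:
  assumes "t \<in> Z" "t < l" "l \<in> Z \<or> l = Suc M" "\<forall>s\<in>Z. s < l \<longrightarrow> s \<le> t"
  shows "seg_end t = l"
proof (cases "l \<in> Z")
  case True
  then have "(LEAST s. s \<in> Z \<and> t < s) = l"
    using assms by (intro Least_equality) (auto simp: not_le[symmetric])
  then show ?thesis using True assms(2) unfolding seg_end_def by auto
next
  case False
  then have "s \<le> t" if "s \<in> Z" for s
    using that assms(3,4) subset_atMost by auto
  then have "\<not> (\<exists>s\<in>Z. t < s)"
    by (auto simp: not_less[symmetric])
  then show ?thesis using False assms(3) unfolding seg_end_def by simp
qed

lemma sum_segments:
  "l \<in> Z \<or> l = Suc M \<Longrightarrow> (\<Sum>t\<in>Z \<inter> {..<l}. \<Sum>k\<in>{t..<seg_end t}. f k) = (\<Sum>k<l. f k)"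
proof (induction l rule: less_induct)
  case (less l)
  show ?case
  proof (cases "l = 0")
    case False
    define t where "t = Max (Z \<inter> {..<l})"
    have "t \<in> Z \<inter> {..<l}"
      unfolding t_def using zero_mem False by (intro Max_in) auto
    then have t: "t \<in> Z" "t < l" by auto
    have t_max: "\<forall>s\<in>Z. s < l \<longrightarrow> s \<le> t"
      unfolding t_def by (simp add: Max_ge)
    have "Z \<inter> {..<l} = insert t (Z \<inter> {..<t})"
      using t t_max by auto
    then have "(\<Sum>s\<in>Z \<inter> {..<l}. \<Sum>k\<in>{s..<seg_end s}. f k)
        = (\<Sum>k\<in>{t..<l}. f k) + (\<Sum>s\<in>Z \<inter> {..<t}. \<Sum>k\<in>{s..<seg_end s}. f k)"
      using seg_end_eqI[OF t less.prems t_max] by simp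
    also have "\<dots> = (\<Sum>k\<in>{t..<l}. f k) + (\<Sum>k<t. f k)"
      using less.IH[of t] t by simp
    also have "\<dots> = (\<Sum>k<l. f k)"
      using sum.atLeastLessThan_concat[of 0 t l f] t by (simp add: atLeast0LessThan add.commute)
    finally show ?thesis .
  qed simp
qed

lemma sum_seg_cont_eq_mod:
  assumes "l \<in> Z \<or> l = Suc M"
  shows "(\<Sum>t\<in>Z \<inter> {..<l}. cont p x t (seg_end t) * p ^ t) = x mod p ^ l"
proof -
  have "(\<Sum>t\<in>Z \<inter> {..<l}. cont p x t (seg_end t) * p ^ t)
      = (\<Sum>t\<in>Z \<inter> {..<l}. \<Sum>k\<in>{t..<seg_end t}. digit p x k * p ^ k)"
    using seg_end_gt by (intro sum.cong refl cont_mult_power) (auto intro: less_imp_le)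
  also have "\<dots> = x mod p ^ l"
    using sum_segments[OF assms] by (simp add: mod_power_eq_digit_sum)
  finally show ?thesis .
qed

lemma sum_seg_cont_eq:
  assumes "x < p ^ Suc M"
  shows "(\<Sum>t\<in>Z. cont p x t (seg_end t) * p ^ t) = x"
proof -
  have "Z \<inter> {..<Suc M} = Z" using subset_atMost by auto
  then show ?thesis using sum_seg_cont_eq_mod[of "Suc M" p x] assms by simp
qed

lemma seg_cont_le_of_mod_le:
  assumes "0 < p" "a \<le> d" "d < p ^ Suc M" "\<forall>l\<in>Z. a mod p ^ l \<le> d mod p ^ l" "t \<in> Z"
  shows "cont p a t (seg_end t) \<le> cont p d t (seg_end t)"
proof (rule ccontr)
  define e where "e = seg_end t"
  have "t \<le> e" using seg_end_gt[OF assms(5)] unfolding e_def by simp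
  have "a mod p ^ e \<le> d mod p ^ e"
    using seg_end_mem[OF assms(5)] assms(2-4) unfolding e_def by (auto simp: le_less_trans)
  moreover have "d mod p ^ t < p ^ t" using assms(1) by simp
  moreover assume "\<not> cont p a t (seg_end t) \<le> cont p d t (seg_end t)"
  then have "(cont p d t e + 1) * p ^ t \<le> cont p a t e * p ^ t"
    unfolding e_def by (intro mult_le_mono1) simp
  ultimately show False
    using mod_power_cont[OF \<open>t \<le> e\<close>, of a p] mod_power_cont[OF \<open>t \<le> e\<close>, of d p] by simp
qed

lemma mod_le_of_seg_cont_le:
  assumes "0 < p" "\<forall>t\<in>Z. w t \<le> cont p d t (seg_end t)" "l \<in> Z"
  shows "(\<Sum>t\<in>Z. w t * p ^ t) mod p ^ l \<le> d mod p ^ l"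
proof -
  define low where "low = (\<Sum>t\<in>Z \<inter> {..<l}. w t * p ^ t)"
  define high where "high = (\<Sum>t\<in>Z - {..<l}. w t * p ^ t)"
  have "low \<le> (\<Sum>t\<in>Z \<inter> {..<l}. cont p d t (seg_end t) * p ^ t)"
    unfolding low_def using assms(2) by (intro sum_mono mult_le_mono1) auto
  also have "\<dots> = d mod p ^ l"
    using sum_seg_cont_eq_mod assms(3) by blast
  finally have low_le: "low \<le> d mod p ^ l" .
  moreover have "d mod p ^ l < p ^ l" using assms(1) by simp
  moreover have "p ^ l dvd high"
    unfolding high_def by (intro dvd_sum dvd_mult le_imp_power_dvd) auto
  moreover have "(\<Sum>t\<in>Z. w t * p ^ t) = low + high"
    unfolding low_def high_def using finite_Z by (simp add: sum.Int_Diff)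
  ultimately show ?thesis by auto
qed

lemma mod_le_iff_mem_weighted_sums:
  assumes "0 < p" "d < p ^ Suc M"
  shows "(a \<le> d \<and> (\<forall>l\<in>Z. a mod p ^ l \<le> d mod p ^ l)) \<longleftrightarrow>
         a \<in> weighted_sums Z (\<lambda>t. cont p d t (seg_end t)) (\<lambda>t. p ^ t)"
proof
  assume H: "a \<le> d \<and> (\<forall>l\<in>Z. a mod p ^ l \<le> d mod p ^ l)"
  then have "a = (\<Sum>t\<in>Z. cont p a t (seg_end t) * p ^ t)"
    using sum_seg_cont_eq[of a p] assms(2) by simp
  then show "a \<in> weighted_sums Z (\<lambda>t. cont p d t (seg_end t)) (\<lambda>t. p ^ t)"
    unfolding weighted_sums_def using seg_cont_le_of_mod_le[OF assms(1) _ assms(2)] H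
    by (intro CollectI exI[of _ "\<lambda>t. cont p a t (seg_end t)"]) auto
next
  assume "a \<in> weighted_sums Z (\<lambda>t. cont p d t (seg_end t)) (\<lambda>t. p ^ t)"
  then obtain w where w: "\<forall>t\<in>Z. w t \<le> cont p d t (seg_end t)" "a = (\<Sum>t\<in>Z. w t * p ^ t)"
    unfolding weighted_sums_def by blast
  have "a \<le> (\<Sum>t\<in>Z. cont p d t (seg_end t) * p ^ t)"
    unfolding w(2) using w(1) by (intro sum_mono mult_le_mono1) auto
  then show "a \<le> d \<and> (\<forall>l\<in>Z. a mod p ^ l \<le> d mod p ^ l)"
    using sum_seg_cont_eq[OF assms(2)] mod_le_of_seg_cont_le[OF assms(1) w(1)] w(2) by simp
qed

end

lemma segmentation_Zset: "segmentation (Zset p d c) (top_index p d)"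
  by unfold_locales (auto simp: Zset_def)

lemma seg_cont_eq_cont_seg_end:
  "seg_cont p d c t = cont p d t (segmentation.seg_end (Zset p d c) (top_index p d) t)"
  unfolding seg_cont_def next_t_def segmentation.seg_end_def[OF segmentation_Zset] ..

lemma sum_seg_cont:
  assumes "2 \<le> p"
  shows "(\<Sum>t\<in>Zset p d c. seg_cont p d c t * p ^ t) = d"
  unfolding seg_cont_eq_cont_seg_end
  by (rule segmentation.sum_seg_cont_eq[OF segmentation_Zset less_power_Suc_top_index[OF assms]])

lemma admissible_exponents_eq_weighted_sums:
  assumes "2 \<le> p"
  shows "{a. a \<le> d \<and> pat_le (carry p d a (d - a)) c} =
         weighted_sums (Zset p d c) (seg_cont p d c) (\<lambda>t. p ^ t)"
proof -
  have "a \<le> d \<and> pat_le (carry p d a (d - a)) c \<longleftrightarrow>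
        a \<le> d \<and> (\<forall>l\<in>Zset p d c. a mod p ^ l \<le> d mod p ^ l)" for a
    using pat_le_carry_iff[of p a d c] mod_le_on_zero_carries_iff_Zset[OF assms, of d c a] assms
    by auto
  also have "\<dots> a \<longleftrightarrow> a \<in> weighted_sums (Zset p d c) (seg_cont p d c) (\<lambda>t. p ^ t)" for a
    unfolding seg_cont_eq_cont_seg_end using assms
    by (intro segmentation.mod_le_iff_mem_weighted_sums[OF segmentation_Zset]
        less_power_Suc_top_index) simp_all
  finally show ?thesis by blast
qed

section \<open>Monomial ideals of \<open>k[x,y]\<close>\<close>

lemma mon_eq_monom: "(mon i j :: 'a::comm_ring_1 poly poly) = monom (monom 1 j) i"
proof -
  have "(varX :: 'a poly poly) ^ i = monom 1 i"
    unfolding varX_def by (simp add: monom_power)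
  moreover have "(varY :: 'a poly poly) ^ j = monom (monom 1 j) 0"
    unfolding varY_def by (simp add: poly_const_pow monom_power monom_0)
  ultimately show ?thesis
    unfolding mon_def by (simp add: mult_monom)
qed

lemma mon_add: "mon (i + i') (j + j') = mon i j * mon i' j'"
  unfolding mon_def by (simp add: power_add ac_simps)

lemma mon_power: "mon i j ^ q = mon (i * q) (j * q)"
  unfolding mon_def by (simp add: power_mult_distrib power_mult)

lemma prod_mon: "(\<Prod>t\<in>T. mon (f t) (g t)) = mon (\<Sum>t\<in>T. f t) (\<Sum>t\<in>T. g t)"
  unfolding mon_def by (simp add: prod.distrib power_sum)

lemma coeff_coeff_mon_mult:
  "coeff (coeff (mon a b * r) i) j =
     (if a \<le> i \<and> b \<le> j then coeff (coeff r (i - a)) (j - b) else (0::'a::comm_ring_1))"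
  by (simp add: mon_eq_monom coeff_monom_mult)

lemma mon_mem_ideal_gen_iff:
  "(mon i j :: 'a::comm_ring_1 poly poly) \<in> ideal_gen {mon a (d - a) |a. a \<in> S} \<longleftrightarrow>
   (\<exists>a\<in>S. a \<le> i \<and> d - a \<le> j)"
proof
  assume "\<exists>a\<in>S. a \<le> i \<and> d - a \<le> j"
  then obtain a where a: "a \<in> S" "a \<le> i" "d - a \<le> j" by blast
  then have "(mon i j :: 'a poly poly) = mon (i - a) (j - (d - a)) * mon a (d - a)"
    by (simp add: mon_add[symmetric])
  then show "(mon i j :: 'a poly poly) \<in> ideal_gen {mon a (d - a) |a. a \<in> S}"
    using a by (auto intro: ideal_gen_mult_left ideal_gen_mem)
next
  assume "(mon i j :: 'a poly poly) \<in> ideal_gen {mon a (d - a) |a. a \<in> S}"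
  then obtain A r where A: "A \<subseteq> {mon a (d - a) |a. a \<in> S}" "(mon i j :: 'a poly poly) = (\<Sum>g\<in>A. r g * g)"
    unfolding ideal_gen_def by blast
  show "\<exists>a\<in>S. a \<le> i \<and> d - a \<le> j"
  proof (rule ccontr)
    assume no_divisor: "\<not> (\<exists>a\<in>S. a \<le> i \<and> d - a \<le> j)"
    have "coeff (coeff (r g * g) i) j = 0" if g: "g \<in> A" for g
    proof -
      obtain a where "a \<in> S" "g = mon a (d - a)" using g A(1) by blast
      then show ?thesis
        using no_divisor coeff_coeff_mon_mult[of a "d - a" "r g" i j] by (auto simp: mult.commute)
    qed
    then have "coeff (coeff (mon i j :: 'a poly poly) i) j = 0"
      unfolding A(2) by (simp add: coeff_sum)
    then show False by (simp add: mon_eq_monom)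
  qed
qed

lemma min_mon_gens_ideal_gen:
  assumes "S \<subseteq> {..d}"
  shows "min_mon_gens (ideal_gen {mon a (d - a) |a. a \<in> S} :: 'a::comm_ring_1 poly poly set)
         = {(a, b). a + b = d \<and> a \<in> S}"
proof (rule set_eqI, clarify, rule iffI)
  fix i j
  assume "(i, j) \<in> min_mon_gens (ideal_gen {mon a (d - a) |a. a \<in> S} :: 'a poly poly set)"
  then obtain a where a: "a \<in> S" "a \<le> i" "d - a \<le> j"
    and min: "\<forall>i' j'. i' \<le> i \<and> j' \<le> j \<and> (i', j') \<noteq> (i, j) \<longrightarrow> \<not> (\<exists>a\<in>S. a \<le> i' \<and> d - a \<le> j')"
    unfolding min_mon_gens_def mon_mem_ideal_gen_iff by blast
  then have "(a, d - a) = (i, j)" by blast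
  then show "(i, j) \<in> {(a, b). a + b = d \<and> a \<in> S}" using a assms by auto
next
  fix i j assume "(i, j) \<in> {(a, b). a + b = d \<and> a \<in> S}"
  then have ij: "i + j = d" "i \<in> S" by auto
  have "\<not> (\<exists>a\<in>S. a \<le> i' \<and> d - a \<le> j')" if "i' \<le> i" "j' \<le> j" "(i', j') \<noteq> (i, j)" for i' j'
    using that ij assms by force
  then show "(i, j) \<in> min_mon_gens (ideal_gen {mon a (d - a) |a. a \<in> S} :: 'a poly poly set)"
    unfolding min_mon_gens_def mon_mem_ideal_gen_iff using ij by auto
qed

lemma prod_varX_varY_eq_mon:
  assumes "finite T" "\<forall>t\<in>T. g t \<in> {varX, varY}"
  shows "\<exists>k\<le>card T. prod g T = (mon k (card T - k) :: 'a::comm_ring_1 poly poly)"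
  using assms
proof (induction T rule: finite_induct)
  case empty
  show ?case by (simp add: mon_def)
next
  case (insert x T)
  then obtain k where k: "k \<le> card T" "prod g T = mon k (card T - k)" by auto
  have "g x = mon 1 0 \<or> g x = mon 0 1"
    using insert.prems by (auto simp: mon_def)
  then show ?case
  proof
    assume "g x = mon 1 0"
    then have "prod g (insert x T) = mon (Suc k) (card T - k)"
      using insert k by (simp add: mon_add[symmetric])
    then show ?case using insert k by (intro exI[of _ "Suc k"]) auto
  next
    assume "g x = mon 0 1"
    then have "prod g (insert x T) = mon k (Suc (card T - k))"
      using insert k by (simp add: mon_add[symmetric])
    then show ?case using insert k by (intro exI[of _ k]) (simp add: Suc_diff_le)
  qed
qed

lemma choice_prods_varX_varY:
  "choice_prods {..<n} (\<lambda>_. {varX, varY}) = {mon i (n - i) :: 'a::comm_ring_1 poly poly | i. i \<le> n}"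
proof safe
  fix z assume "z \<in> choice_prods {..<n} (\<lambda>_. {varX, varY :: 'a poly poly})"
  then obtain g where "\<forall>t\<in>{..<n}. g t \<in> {varX, varY}" "z = prod g {..<n}"
    unfolding choice_prods_def by blast
  then show "\<exists>i. z = mon i (n - i) \<and> i \<le> n"
    using prod_varX_varY_eq_mon[of "{..<n}" g] by auto
next
  fix i assume "i \<le> n"
  define g where "g t = (if t < i then varX else varY :: 'a poly poly)" for t
  have "{..<n} = {..<i} \<union> {i..<n}" "{..<i} \<inter> {i..<n} = {}"
    using \<open>i \<le> n\<close> by auto
  then have "(\<Prod>t<n. g t) = (\<Prod>t<i. g t) * (\<Prod>t\<in>{i..<n}. g t)"
    by (simp add: prod.union_disjoint)
  also have "\<dots> = mon i (n - i)"
    unfolding g_def mon_def by simp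
  finally have "mon i (n - i) = (\<Prod>t<n. g t)" by simp
  moreover have "\<forall>t\<in>{..<n}. g t \<in> {varX, varY}"
    unfolding g_def by simp
  ultimately show "mon i (n - i) \<in> choice_prods {..<n} (\<lambda>_. {varX, varY :: 'a poly poly})"
    unfolding choice_prods_def by blast
qed

lemma ideal_pow_max_ideal:
  "(ideal_pow max_ideal n :: 'a::comm_ring_1 poly poly set) = ideal_gen {mon i (n - i) | i. i \<le> n}"
  unfolding ideal_pow_def max_ideal_def ideal_prod_ideal_gen[OF finite_lessThan]
    choice_prods_varX_varY ..

lemma prod_mon_power_complement:
  assumes "\<forall>t\<in>Z. w t \<le> n t"
  shows "(\<Prod>t\<in>Z. mon (w t) (n t - w t) ^ q t) =
    mon (\<Sum>t\<in>Z. w t * q t) ((\<Sum>t\<in>Z. n t * q t) - (\<Sum>t\<in>Z. w t * q t))"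
proof -
  have "(\<Sum>t\<in>Z. (n t - w t) * q t) = (\<Sum>t\<in>Z. n t * q t) - (\<Sum>t\<in>Z. w t * q t)"
    unfolding diff_mult_distrib using assms by (intro sum_subtractf_nat) (simp add: mult_le_mono1)
  then show ?thesis
    unfolding mon_power prod_mon by simp
qed

lemma choice_prods_powers_of_monomials:
  "choice_prods Z (\<lambda>t. (\<lambda>f. f ^ q t) ` {mon i (n t - i) | i. i \<le> n t}) =
   {mon a ((\<Sum>t\<in>Z. n t * q t) - a) :: 'a::comm_ring_1 poly poly | a. a \<in> weighted_sums Z n q}"
proof safe
  fix z assume "z \<in> choice_prods Z (\<lambda>t. (\<lambda>f. f ^ q t) ` {mon i (n t - i) :: 'a poly poly | i. i \<le> n t})"
  then obtain g where g: "\<forall>t\<in>Z. \<exists>i. i \<le> n t \<and> g t = mon i (n t - i) ^ q t" "z = (\<Prod>t\<in>Z. g t)"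
    unfolding choice_prods_def by blast
  then obtain w where w: "\<forall>t\<in>Z. w t \<le> n t \<and> g t = mon (w t) (n t - w t) ^ q t"
    by metis
  then have "z = mon (\<Sum>t\<in>Z. w t * q t) ((\<Sum>t\<in>Z. n t * q t) - (\<Sum>t\<in>Z. w t * q t))"
    unfolding g(2) using prod_mon_power_complement[of Z w n q] by (simp cong: prod.cong)
  then show "\<exists>a. z = mon a ((\<Sum>t\<in>Z. n t * q t) - a) \<and> a \<in> weighted_sums Z n q"
    unfolding weighted_sums_def using w by blast
next
  fix a assume "a \<in> weighted_sums Z n q"
  then obtain w where w: "\<forall>t\<in>Z. w t \<le> n t" "a = (\<Sum>t\<in>Z. w t * q t)"
    unfolding weighted_sums_def by blast
  then show "mon a ((\<Sum>t\<in>Z. n t * q t) - a)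
      \<in> choice_prods Z (\<lambda>t. (\<lambda>f. f ^ q t) ` {mon i (n t - i) :: 'a poly poly | i. i \<le> n t})"
    unfolding choice_prods_def w(2) prod_mon_power_complement[OF w(1), symmetric]
    by (intro CollectI exI[of _ "\<lambda>t. mon (w t) (n t - w t) ^ q t"]) (use w(1) in blast)
qed

lemma ideal_prod_frob_pow_max_ideal:
  assumes "finite Z" "prime CHAR('a::comm_ring_1)"
  shows "ideal_prod Z (\<lambda>t. frob_pow (ideal_pow max_ideal (n t)) (CHAR('a) ^ t)) =
    (ideal_gen {mon a ((\<Sum>t\<in>Z. n t * CHAR('a) ^ t) - a) | a. a \<in> weighted_sums Z n (\<lambda>t. CHAR('a) ^ t)}
      :: 'a poly poly set)"
proof -
  have frob: "frob_pow (ideal_gen G) (CHAR('a) ^ t) = ideal_gen ((\<lambda>f. f ^ CHAR('a) ^ t) ` G)"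
    for G :: "'a poly poly set" and t
    by (rule frob_pow_ideal_gen) (simp_all add: assms(2))
  show ?thesis
    unfolding ideal_pow_max_ideal frob ideal_prod_ideal_gen[OF assms(1)]
      choice_prods_powers_of_monomials ..
qed

lemma Icd_eq_ideal_gen_admissible:
  "Icd p d c = ideal_gen {mon a (d - a) | a. a \<in> {a. a \<le> d \<and> pat_le (carry p d a (d - a)) c}}"
  unfolding Icd_def
  by (rule arg_cong[where f = ideal_gen])
    (auto; metis add_diff_cancel_left' le_add1 le_add_diff_inverse)

theorem mainTheorem10:
  fixes p d :: nat and c :: "nat \<Rightarrow> nat"
  assumes "prime p"
    and "CHAR('a::alg_closed_field) = p"
    and "d \<ge> 1"
    and "c \<in> carry_patterns d p"
  shows "(Icd p d c :: 'a poly poly set) =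
           ideal_prod (Zset p d c)
             (\<lambda>t. frob_pow (ideal_pow max_ideal (seg_cont p d c t)) (p ^ t))
       \<and> min_mon_gens (Icd p d c :: 'a poly poly set) =
           {(a, b). a + b = d \<and>
              (\<exists>w. (\<forall>t\<in>Zset p d c. w t \<le> seg_cont p d c t) \<and>
                   a = (\<Sum>t\<in>Zset p d c. w t * p ^ t))}"
proof -
  have "2 \<le> p" using assms(1) by (rule prime_ge_2_nat)
  define A where "A = weighted_sums (Zset p d c) (seg_cont p d c) (\<lambda>t. p ^ t)"
  have admissible: "{a. a \<le> d \<and> pat_le (carry p d a (d - a)) c} = A"
    unfolding A_def by (rule admissible_exponents_eq_weighted_sums[OF \<open>2 \<le> p\<close>])
  have Icd: "(Icd p d c :: 'a poly poly set) = ideal_gen {mon a (d - a) | a. a \<in> A}"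
    unfolding Icd_eq_ideal_gen_admissible admissible ..
  have "ideal_prod (Zset p d c) (\<lambda>t. frob_pow (ideal_pow max_ideal (seg_cont p d c t)) (p ^ t))
      = (ideal_gen {mon a (d - a) | a. a \<in> A} :: 'a poly poly set)"
    using ideal_prod_frob_pow_max_ideal[OF segmentation.finite_Z[OF segmentation_Zset], where 'a = 'a]
      sum_seg_cont[OF \<open>2 \<le> p\<close>] assms(1,2)
    unfolding A_def by simp
  moreover have "min_mon_gens (Icd p d c :: 'a poly poly set) = {(a, b). a + b = d \<and> a \<in> A}"
    unfolding Icd using admissible by (intro min_mon_gens_ideal_gen) auto
  ultimately show ?thesis
    using Icd unfolding A_def weighted_sums_def by auto
qed

end
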